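(* Let $C$ be a unital countably quantifier-free saturated C*-algebra and $B$ a separable C*-subalgebra of $C$. If $\Phi\colon B\to C$ is an approximately inner injective *-homomorphism, then there is a unitary $u\in C$ with $\Phi(b)=ubu^*$ for all $b\in B$.
   Context: $\Phi\colon B\to C$ is approximately inner if for every $\varepsilon>0$ and every finite $F\subseteq B$ there is a unitary $u\in C$ with $\|\Phi(a)-uau^*\|<\varepsilon$ for all $a\in F$. For $F\subseteq\mathbb R$, $\varepsilon>0$, $F_\varepsilon=\{x:\operatorname{dist}(x,F)\le\varepsilon\}$. $C$ is countably quantifier-free saturated if for every sequence $P_n(\bar x)$ of *-polynomials with coefficients in $C$ in variables $x_k$ ($k\in\mathbb N$) and compact $K_n\subseteq\mathbb R$, the following are equivalent: (i) there are $b_k$ in the unit ball of $C$ with $\|P_n(\bar b)\|\in K_n$ for all $n$; (ii) for every $m$ there are $b_k$ in the unit ball with $\|P_n(\bar b)\|\in(K_n)_{1/m}$ for all $n\le m$. *)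

theory Defs
  imports "HOL-Analysis.Analysis"
begin

text \<open>A unital C*-algebra is modelled as a type 'a of class real_normed_algebra_1
  (unital real Banach algebra with norm 1 = 1) and banach, together with a complex
  scalar multiplication sc extending the real one and an involution st.\<close>

definition cstar_algebra :: "(complex \<Rightarrow> 'a::{real_normed_algebra_1,banach} \<Rightarrow> 'a) \<Rightarrow> ('a \<Rightarrow> 'a) \<Rightarrow> bool" where
  "cstar_algebra sc st \<longleftrightarrow>
     (\<forall>r x. sc (complex_of_real r) x = scaleR r x) \<and>
     (\<forall>c x y. sc c (x + y) = sc c x + sc c y) \<and>
     (\<forall>c d x. sc (c + d) x = sc c x + sc d x) \<and>
     (\<forall>c d x. sc (c * d) x = sc c (sc d x)) \<and>
     (\<forall>c x y. sc c (x * y) = sc c x * y) \<and>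
     (\<forall>c x y. sc c (x * y) = x * sc c y) \<and>
     (\<forall>c x. norm (sc c x) = cmod c * norm x) \<and>
     (\<forall>x. st (st x) = x) \<and>
     (\<forall>x y. st (x + y) = st x + st y) \<and>
     (\<forall>c x. st (sc c x) = sc (cnj c) (st x)) \<and>
     (\<forall>x y. st (x * y) = st y * st x) \<and>
     (\<forall>x. norm (st x * x) = (norm x)\<^sup>2)"

definition cstar_subalgebra :: "(complex \<Rightarrow> 'a::{real_normed_algebra_1,banach} \<Rightarrow> 'a) \<Rightarrow> ('a \<Rightarrow> 'a) \<Rightarrow> 'a set \<Rightarrow> bool" where
  "cstar_subalgebra sc st B \<longleftrightarrow>
     0 \<in> B \<and> (\<forall>x\<in>B. \<forall>y\<in>B. x + y \<in> B \<and> x * y \<in> B) \<and>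
     (\<forall>c. \<forall>x\<in>B. sc c x \<in> B) \<and> (\<forall>x\<in>B. st x \<in> B) \<and> closed B"

definition separable_set :: "'a::metric_space set \<Rightarrow> bool" where
  "separable_set B \<longleftrightarrow> (\<exists>D. countable D \<and> D \<subseteq> B \<and> B \<subseteq> closure D)"

definition star_hom_on :: "(complex \<Rightarrow> 'a::{real_normed_algebra_1,banach} \<Rightarrow> 'a) \<Rightarrow> ('a \<Rightarrow> 'a) \<Rightarrow> 'a set \<Rightarrow> ('a \<Rightarrow> 'a) \<Rightarrow> bool" where
  "star_hom_on sc st B \<Phi> \<longleftrightarrow>
     (\<forall>x\<in>B. \<forall>y\<in>B. \<Phi> (x + y) = \<Phi> x + \<Phi> y \<and> \<Phi> (x * y) = \<Phi> x * \<Phi> y) \<and>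
     (\<forall>c. \<forall>x\<in>B. \<Phi> (sc c x) = sc c (\<Phi> x)) \<and>
     (\<forall>x\<in>B. \<Phi> (st x) = st (\<Phi> x))"

definition unitary :: "('a::real_normed_algebra_1 \<Rightarrow> 'a) \<Rightarrow> 'a \<Rightarrow> bool" where
  "unitary st u \<longleftrightarrow> st u * u = 1 \<and> u * st u = 1"

definition approx_inner :: "('a::{real_normed_algebra_1,banach} \<Rightarrow> 'a) \<Rightarrow> 'a set \<Rightarrow> ('a \<Rightarrow> 'a) \<Rightarrow> bool" where
  "approx_inner st B \<Phi> \<longleftrightarrow>
     (\<forall>\<epsilon>>0. \<forall>F. finite F \<and> F \<subseteq> B \<longrightarrow>
        (\<exists>u. unitary st u \<and> (\<forall>a\<in>F. norm (\<Phi> a - u * a * st u) < \<epsilon>)))"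

text \<open>*-polynomials (noncommutative) with coefficients in the algebra, in variables x_k, k :: nat.
  Complex scalars are absorbed into coefficients (c x = (c 1) x).\<close>
datatype 'a spoly = PVar nat | PConst 'a | PAdd "'a spoly" "'a spoly"
  | PMul "'a spoly" "'a spoly" | PStar "'a spoly"

primrec peval :: "('a::real_normed_algebra_1 \<Rightarrow> 'a) \<Rightarrow> (nat \<Rightarrow> 'a) \<Rightarrow> 'a spoly \<Rightarrow> 'a" where
  "peval st b (PVar k) = b k"
| "peval st b (PConst c) = c"
| "peval st b (PAdd p q) = peval st b p + peval st b q"
| "peval st b (PMul p q) = peval st b p * peval st b q"
| "peval st b (PStar p) = st (peval st b p)"

definition fatten :: "real set \<Rightarrow> real \<Rightarrow> real set" where
  "fatten F \<epsilon> = {x. \<exists>y\<in>F. \<bar>x - y\<bar> \<le> \<epsilon>}"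

definition qf_saturated :: "('a::{real_normed_algebra_1,banach} \<Rightarrow> 'a) \<Rightarrow> bool" where
  "qf_saturated st \<longleftrightarrow>
     (\<forall>(P :: nat \<Rightarrow> 'a spoly) (K :: nat \<Rightarrow> real set). (\<forall>n. compact (K n)) \<longrightarrow>
        ((\<exists>b. (\<forall>k. norm (b k) \<le> 1) \<and> (\<forall>n. norm (peval st b (P n)) \<in> K n)) \<longleftrightarrow>
         (\<forall>m::nat. m \<ge> 1 \<longrightarrow> (\<exists>b. (\<forall>k. norm (b k) \<le> 1) \<and>
             (\<forall>n\<le>m. norm (peval st b (P n)) \<in> fatten (K n) (1 / real m))))))"

end

theory Submission
  imports Defs
begin

(* Enumerate a countable dense subset of B as e 0, e 1, ...  The conditions
   "u is unitary and Phi (e j) = u e_j u* for every j" form a countable system of norm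
   conditions  ||P_n(u)|| = 0  on a single variable u in the unit ball (unitaries have norm 1).
   Approximate innerness makes every finite part of the system approximately solvable, so
   countable quantifier-free saturation yields an exact solution u.  Finally Phi and
   conjugation by u are both non-expansive on B (for Phi this follows again from approximate
   innerness), so agreeing on the dense set they agree on all of B. *)

text \<open>In a C*-algebra a unitary and its adjoint lie in the unit ball; this lets a unitary
  serve as a witness in the saturation property.\<close>
lemma unitary_norm_le_1:
  assumes "cstar_algebra sc st" and "unitary st u"
  shows "norm u \<le> 1" and "norm (st u) \<le> 1"
proof -
  have cstar: "\<And>x. norm (st x * x) = (norm x)\<^sup>2" and invol: "\<And>x. st (st x) = x"
    using assms(1) unfolding cstar_algebra_def by auto
  have u: "st u * u = 1" "u * st u = 1"
    using assms(2) unfolding unitary_def by auto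
  have "(norm u)\<^sup>2 = 1" using cstar[of u] u by simp
  then show "norm u \<le> 1" by (simp add: power2_eq_1_iff) linarith
  have "(norm (st u))\<^sup>2 = 1" using cstar[of "st u"] u invol by simp
  then show "norm (st u) \<le> 1" by (simp add: power2_eq_1_iff) linarith
qed

lemma norm_mult_contractions_le:
  fixes v w x :: "'a::real_normed_algebra_1"
  assumes "norm v \<le> 1" and "norm w \<le> 1"
  shows "norm (v * x * w) \<le> norm x"
proof -
  have "norm (v * x * w) \<le> norm v * norm x * norm w"
    by (meson norm_mult_ineq mult_right_mono norm_ge_zero order_trans)
  also have "\<dots> \<le> 1 * norm x * 1"
    using assms by (intro mult_mono) auto
  finally show ?thesis by simp
qed

lemma unitary_conj_nonexpansive:
  assumes "cstar_algebra sc st" and "unitary st u"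
  shows "norm (u * x * st u - u * y * st u) \<le> norm (x - y)"
proof -
  have "u * x * st u - u * y * st u = u * (x - y) * st u"
    by (simp add: algebra_simps)
  then show ?thesis
    using norm_mult_contractions_le[OF unitary_norm_le_1[OF assms]] by simp
qed

text \<open>An approximately inner map is non-expansive: it is a pointwise limit of
  conjugations by unitaries, each of which is non-expansive.\<close>
lemma approx_inner_nonexpansive:
  assumes cstar: "cstar_algebra sc st" and inner: "approx_inner st B \<Phi>"
    and "x \<in> B" and "y \<in> B"
  shows "norm (\<Phi> x - \<Phi> y) \<le> norm (x - y)"
proof (rule field_le_epsilon)
  fix t :: real
  assume "0 < t"
  then obtain v where v: "unitary st v"
    and close: "\<forall>a\<in>{x, y}. norm (\<Phi> a - v * a * st v) < t / 2"
  proof -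
    have "finite {x, y}" and "{x, y} \<subseteq> B" and "0 < t / 2"
      using \<open>0 < t\<close> \<open>x \<in> B\<close> \<open>y \<in> B\<close> by auto
    then show ?thesis using inner that unfolding approx_inner_def by blast
  qed
  have "\<Phi> x - \<Phi> y = (\<Phi> x - v * x * st v) - (\<Phi> y - v * y * st v)
                      + (v * x * st v - v * y * st v)"
    by (simp add: algebra_simps)
  then have "norm (\<Phi> x - \<Phi> y) \<le> norm (\<Phi> x - v * x * st v) + norm (\<Phi> y - v * y * st v)
                                    + norm (v * x * st v - v * y * st v)"
    by (smt (verit) norm_triangle_ineq norm_triangle_ineq4)
  also have "\<dots> \<le> t / 2 + t / 2 + norm (x - y)"
    using close unitary_conj_nonexpansive[OF cstar v] by (intro add_mono) auto
  finally show "norm (\<Phi> x - \<Phi> y) \<le> norm (x - y) + t" by simp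
qed

lemma nonexpansive_agree_on_closure:
  fixes f g :: "'a::real_normed_vector \<Rightarrow> 'b::real_normed_vector"
  assumes f: "\<forall>x\<in>B. \<forall>y\<in>B. norm (f x - f y) \<le> norm (x - y)"
    and g: "\<forall>x\<in>B. \<forall>y\<in>B. norm (g x - g y) \<le> norm (x - y)"
    and "D \<subseteq> B" and "B \<subseteq> closure D" and agree: "\<forall>d\<in>D. f d = g d" and "x \<in> B"
  shows "f x = g x"
proof -
  have "norm (f x - g x) \<le> 0"
  proof (rule field_le_epsilon)
    fix t :: real
    assume "0 < t"
    then obtain d where "d \<in> D" and near: "dist d x < t / 2"
      using \<open>x \<in> B\<close> \<open>B \<subseteq> closure D\<close> closure_approachable
      by (metis half_gt_zero subsetD)
    then have "d \<in> B" using \<open>D \<subseteq> B\<close> by auto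
    have "f x - g x = (f x - f d) + (g d - g x)"
      using agree \<open>d \<in> D\<close> by simp
    then have "norm (f x - g x) \<le> norm (f x - f d) + norm (g d - g x)"
      by (metis norm_triangle_ineq)
    also have "\<dots> \<le> norm (x - d) + norm (d - x)"
      using f g \<open>x \<in> B\<close> \<open>d \<in> B\<close> by (intro add_mono) auto
    also have "\<dots> < t"
      using near by (simp add: dist_norm norm_minus_commute)
    finally show "norm (f x - g x) \<le> 0 + t" by simp
  qed
  then show ?thesis by simp
qed

lemma separable_set_dense_sequence:
  assumes "separable_set B" and "B \<noteq> {}"
  obtains e :: "nat \<Rightarrow> 'a::metric_space" where "range e \<subseteq> B" and "B \<subseteq> closure (range e)"
proof -
  obtain D where D: "countable D" "D \<subseteq> B" "B \<subseteq> closure D"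
    using assms(1) unfolding separable_set_def by auto
  then have "D \<noteq> {}" using assms(2) by auto
  then have "range (from_nat_into D) = D"
    using D(1) by simp
  then show ?thesis using that D by metis
qed

lemma norm_in_fatten_zero_iff: "norm x \<in> fatten {0} eps \<longleftrightarrow> norm x \<le> eps"
  by (simp add: fatten_def)

lemma qf_saturated_exact_solution:
  assumes sat: "qf_saturated st"
    and approx: "\<forall>m::nat. m \<ge> 1 \<longrightarrow> (\<exists>b. (\<forall>k. norm (b k) \<le> 1) \<and>
                    (\<forall>n\<le>m. norm (peval st b (P n)) \<le> 1 / real m))"
  shows "\<exists>b. (\<forall>k. norm (b k) \<le> 1) \<and> (\<forall>n. peval st b (P n) = 0)"
proof -
  have "\<exists>b. (\<forall>k. norm (b k) \<le> 1) \<and> (\<forall>n. norm (peval st b (P n)) \<in> {0})"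
    using sat approx unfolding qf_saturated_def
    by (simp only: norm_in_fatten_zero_iff compact_sing simp_thms)
  then show ?thesis by simp
qed

fun conj_system :: "('a::real_normed_algebra_1 \<Rightarrow> 'a) \<Rightarrow> (nat \<Rightarrow> 'a) \<Rightarrow> nat \<Rightarrow> 'a spoly" where
  "conj_system \<Phi> e 0 = PAdd (PMul (PStar (PVar 0)) (PVar 0)) (PConst (-1))"
| "conj_system \<Phi> e (Suc 0) = PAdd (PMul (PVar 0) (PStar (PVar 0))) (PConst (-1))"
| "conj_system \<Phi> e (Suc (Suc j)) =
     PAdd (PConst (\<Phi> (e j))) (PMul (PConst (-1)) (PMul (PMul (PVar 0) (PConst (e j))) (PStar (PVar 0))))"

lemma peval_conj_system:
  "peval st b (conj_system \<Phi> e 0) = st (b 0) * b 0 - 1"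
  "peval st b (conj_system \<Phi> e (Suc 0)) = b 0 * st (b 0) - 1"
  "peval st b (conj_system \<Phi> e (Suc (Suc j))) = \<Phi> (e j) - b 0 * e j * st (b 0)"
  by simp_all

lemma conj_system_solution_iff:
  "(\<forall>n. peval st b (conj_system \<Phi> e n) = 0) \<longleftrightarrow>
     unitary st (b 0) \<and> (\<forall>j. \<Phi> (e j) = b 0 * e j * st (b 0))"
proof -
  have "(\<forall>n. peval st b (conj_system \<Phi> e n) = 0) \<longleftrightarrow>
        peval st b (conj_system \<Phi> e 0) = 0 \<and> peval st b (conj_system \<Phi> e (Suc 0)) = 0 \<and>
        (\<forall>j. peval st b (conj_system \<Phi> e (Suc (Suc j))) = 0)"
    by (metis not0_implies_Suc)
  then show ?thesis
    unfolding peval_conj_system unitary_def by simp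
qed

lemma approx_inner_approx_solutions:
  assumes cstar: "cstar_algebra sc st" and inner: "approx_inner st B \<Phi>"
    and "range e \<subseteq> B" and "m \<ge> 1"
  shows "\<exists>b. (\<forall>k. norm (b k) \<le> 1) \<and>
             (\<forall>n\<le>m. norm (peval st b (conj_system \<Phi> e n)) \<le> 1 / real m)"
proof -
  have "finite (e ` {..<m})" and "e ` {..<m} \<subseteq> B" and "0 < 1 / real m"
    using assms by auto
  then obtain v where v: "unitary st v"
    and close: "\<forall>a\<in>e ` {..<m}. norm (\<Phi> a - v * a * st v) < 1 / real m"
    using inner unfolding approx_inner_def by blast
  have "norm (peval st (\<lambda>k. v) (conj_system \<Phi> e n)) \<le> 1 / real m" if "n \<le> m" for n
  proof -
    consider "n = 0" | "n = Suc 0" | j where "n = Suc (Suc j)"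
      by (metis not0_implies_Suc)
    then show ?thesis
    proof cases
      case 3
      then have "j < m" using \<open>n \<le> m\<close> by simp
      then show ?thesis using close 3 by (auto simp: less_imp_le)
    qed (use v \<open>0 < 1 / real m\<close> in \<open>auto simp: unitary_def\<close>)
  qed
  moreover have "norm v \<le> 1" using unitary_norm_le_1[OF cstar v] by simp
  ultimately show ?thesis by (intro exI[of _ "\<lambda>k. v"]) auto
qed

text \<open>Only approximate innerness, saturation, separability and nonemptiness of B enter the
  argument.\<close>

theorem mainTheorem16:
  fixes sc :: "complex \<Rightarrow> 'a::{real_normed_algebra_1,banach} \<Rightarrow> 'a"
    and st :: "'a \<Rightarrow> 'a" and B :: "'a set" and \<Phi> :: "'a \<Rightarrow> 'a"
  assumes "cstar_algebra sc st"
    and "qf_saturated st"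
    and "cstar_subalgebra sc st B"
    and "separable_set B"
    and "star_hom_on sc st B \<Phi>"
    and "inj_on \<Phi> B"
    and "approx_inner st B \<Phi>"
  shows "\<exists>u. unitary st u \<and> (\<forall>b\<in>B. \<Phi> b = u * b * st u)"
proof -
  have "B \<noteq> {}" using assms(3) unfolding cstar_subalgebra_def by blast
  then obtain e :: "nat \<Rightarrow> 'a" where e: "range e \<subseteq> B" "B \<subseteq> closure (range e)"
    using separable_set_dense_sequence[OF assms(4)] by blast
  have "\<forall>m::nat. m \<ge> 1 \<longrightarrow> (\<exists>b. (\<forall>k. norm (b k) \<le> 1) \<and>
          (\<forall>n\<le>m. norm (peval st b (conj_system \<Phi> e n)) \<le> 1 / real m))"
    using approx_inner_approx_solutions[OF assms(1) assms(7) e(1)] by simp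
  then obtain b where "\<forall>n. peval st b (conj_system \<Phi> e n) = 0"
    using qf_saturated_exact_solution[OF assms(2)] by blast
  then have u: "unitary st (b 0)" and agree: "\<forall>j. \<Phi> (e j) = b 0 * e j * st (b 0)"
    by (simp_all add: conj_system_solution_iff)
  have "\<Phi> x = b 0 * x * st (b 0)" if "x \<in> B" for x
  proof (rule nonexpansive_agree_on_closure[OF _ _ e(1) e(2) _ that])
    show "\<forall>x\<in>B. \<forall>y\<in>B. norm (\<Phi> x - \<Phi> y) \<le> norm (x - y)"
      using approx_inner_nonexpansive[OF assms(1) assms(7)] by blast
    show "\<forall>x\<in>B. \<forall>y\<in>B. norm (b 0 * x * st (b 0) - b 0 * y * st (b 0)) \<le> norm (x - y)"
      using unitary_conj_nonexpansive[OF assms(1) u] by blast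
    show "\<forall>d\<in>range e. \<Phi> d = b 0 * d * st (b 0)"
      using agree by blast
  qed
  with u show ?thesis by blast
qed

end
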